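(* Let $G_n$ be a random $d$-regular multigraph on $n$ vertices (configuration model), with $d$ fixed and independent of $n$. Assume the strong external infection regime $0<\kappa<\frac{1}{4(n-1)^2}$, $a>1-\frac{1}{n^\alpha}>1-\kappa>\frac12$ for some $\alpha>1$, and additionally $\lambda\le\frac{1}{dn^\alpha}$. Let $t^{(n)}_{\mathrm{mix}}(\epsilon)$ be the mixing time of the noisy SIS model run on the realized multigraph. Then for every fixed $\epsilon\in(0,1)$ there is a sequence $\delta_n\to0$ such that for every $\epsilon'>0$ and all $n$ large enough, $$\mathbf{P}\Big(\tfrac{n}{2}\log n\,(1-\delta_n)\le t^{(n)}_{\mathrm{mix}}(\epsilon)\le 2n\log n\,(1+\delta_n)\Big)\ge1-\epsilon',$$ where $\mathbf{P}$ is the law of the random multigraph.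
   Context: Configuration model for a random $d$-regular multigraph ($dn$ even): each of the $n$ vertices receives $d$ half-edges; the $dn$ half-edges are paired uniformly at random, each pair forming an edge; self-loops and multiple edges are allowed. The state space is $\Omega_n=\{0,1\}^{V_n}$. For $\sigma\in\Omega_n$, $x\in V_n$, let $n_{I,\sigma}(x)=\#\{e\in E_n: e=(x,y),\ x\ne y,\ \sigma_y=1\}$ (edges counted with multiplicity, self-loops excluded), and $\Delta^{(n)}_{\max}$ the maximal degree. Fix $a,\lambda,\kappa>0$ (may depend on $n$), put $p(\sigma,x)=a+\lambda\, n_{I,\sigma}(x)$. The noisy SIS model is the discrete-time Markov chain on $\Omega_n$ in which, at each step, a vertex $x$ is chosen uniformly at random and only its state may change: if $\sigma_x=0$ it becomes $1$ with probability $p(\sigma,x)$ and stays $0$ otherwise; if $\sigma_x=1$ it becomes $0$ with probability $\kappa$ and stays $1$ otherwise. It has unique stationary distribution $\mu^n_{a,\lambda,\kappa}$. With $\mu^n_{\eta_0,t}$ the law at time $t$ from $\eta_0$ and $d_{TV}$ total variation distance, $d^{(n)}(t)=\sup_{\eta_0}d_{TV}(\mu^n_{\eta_0,t},\mu^n_{a,\lambda,\kappa})$ and $t^{(n)}_{\mathrm{mix}}(\epsilon)=\inf\{t\ge0:d^{(n)}(t)\le\epsilon\}$. *)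

theory Defs
  imports "HOL-Probability.Probability_Mass_Function"
begin

text \<open>Vertices are 0..n-1, half-edges are 0..d*n-1, half-edge h
  belongs to vertex h div d. A pairing is a fixed-point-free involution of the half-edges
  (extended by the identity outside).\<close>

definition pairings :: "nat \<Rightarrow> nat \<Rightarrow> (nat \<Rightarrow> nat) set" where
  "pairings d n = {f. (\<forall>h<d*n. f h < d*n \<and> f h \<noteq> h \<and> f (f h) = h) \<and> (\<forall>h\<ge>d*n. f h = h)}"

definition config_model :: "nat \<Rightarrow> nat \<Rightarrow> (nat \<Rightarrow> nat) pmf" where
  "config_model d n = pmf_of_set (pairings d n)"

text \<open>Number of infected neighbours of x (edges with multiplicity, self-loops excluded):
  each edge x--y with y \<noteq> x corresponds to exactly one half-edge h at x with partner at y.\<close>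
definition nI :: "nat \<Rightarrow> nat \<Rightarrow> (nat \<Rightarrow> nat) \<Rightarrow> (nat \<Rightarrow> bool) \<Rightarrow> nat \<Rightarrow> nat" where
  "nI d n f \<sigma> x = card {h. h < d*n \<and> h div d = x \<and> f h div d \<noteq> x \<and> \<sigma> (f h div d)}"

definition states :: "nat \<Rightarrow> (nat \<Rightarrow> bool) set" where
  "states n = {\<sigma>. \<forall>x\<ge>n. \<sigma> x = False}"

definition infp :: "nat \<Rightarrow> nat \<Rightarrow> (nat \<Rightarrow> nat) \<Rightarrow> real \<Rightarrow> real \<Rightarrow> (nat \<Rightarrow> bool) \<Rightarrow> nat \<Rightarrow> real" where
  "infp d n f a lam \<sigma> x = min 1 (a + lam * real (nI d n f \<sigma> x))"

definition site_step :: "nat \<Rightarrow> nat \<Rightarrow> (nat \<Rightarrow> nat) \<Rightarrow> real \<Rightarrow> real \<Rightarrow> real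
    \<Rightarrow> nat \<Rightarrow> (nat \<Rightarrow> bool) \<Rightarrow> (nat \<Rightarrow> bool) \<Rightarrow> real" where
  "site_step d n f a lam kap x \<sigma> \<tau> =
     (if \<sigma> x then (if \<tau> = \<sigma>(x := False) then kap else 0) + (if \<tau> = \<sigma> then 1 - kap else 0)
      else (if \<tau> = \<sigma>(x := True) then infp d n f a lam \<sigma> x else 0)
           + (if \<tau> = \<sigma> then 1 - infp d n f a lam \<sigma> x else 0))"

definition sis_P :: "nat \<Rightarrow> nat \<Rightarrow> (nat \<Rightarrow> nat) \<Rightarrow> real \<Rightarrow> real \<Rightarrow> real
    \<Rightarrow> (nat \<Rightarrow> bool) \<Rightarrow> (nat \<Rightarrow> bool) \<Rightarrow> real" where
  "sis_P d n f a lam kap \<sigma> \<tau> = (\<Sum>x<n. site_step d n f a lam kap x \<sigma> \<tau>) / real n"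

primrec chain_dist :: "('s \<Rightarrow> 's \<Rightarrow> real) \<Rightarrow> 's set \<Rightarrow> 's \<Rightarrow> nat \<Rightarrow> 's \<Rightarrow> real" where
  "chain_dist P S s0 0 = (\<lambda>s. if s = s0 then 1 else 0)"
| "chain_dist P S s0 (Suc t) = (\<lambda>s. \<Sum>r\<in>S. chain_dist P S s0 t r * P r s)"

definition is_stationary :: "('s \<Rightarrow> 's \<Rightarrow> real) \<Rightarrow> 's set \<Rightarrow> ('s \<Rightarrow> real) \<Rightarrow> bool" where
  "is_stationary P S \<pi> \<longleftrightarrow> (\<forall>s\<in>S. 0 \<le> \<pi> s) \<and> (\<forall>s. s \<notin> S \<longrightarrow> \<pi> s = 0)
      \<and> (\<Sum>s\<in>S. \<pi> s) = 1 \<and> (\<forall>s\<in>S. (\<Sum>r\<in>S. \<pi> r * P r s) = \<pi> s)"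

definition stat_dist :: "('s \<Rightarrow> 's \<Rightarrow> real) \<Rightarrow> 's set \<Rightarrow> 's \<Rightarrow> real" where
  "stat_dist P S = (THE \<pi>. is_stationary P S \<pi>)"

definition tv_dist :: "'s set \<Rightarrow> ('s \<Rightarrow> real) \<Rightarrow> ('s \<Rightarrow> real) \<Rightarrow> real" where
  "tv_dist S \<mu> \<nu> = (\<Sum>s\<in>S. \<bar>\<mu> s - \<nu> s\<bar>) / 2"

definition worst_dist :: "('s \<Rightarrow> 's \<Rightarrow> real) \<Rightarrow> 's set \<Rightarrow> nat \<Rightarrow> real" where
  "worst_dist P S t = Max ((\<lambda>s0. tv_dist S (chain_dist P S s0 t) (stat_dist P S)) ` S)"

definition mix_time :: "('s \<Rightarrow> 's \<Rightarrow> real) \<Rightarrow> 's set \<Rightarrow> real \<Rightarrow> nat" where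
  "mix_time P S \<epsilon> = Inf {t. worst_dist P S t \<le> \<epsilon>}"

definition sis_mix :: "nat \<Rightarrow> nat \<Rightarrow> (nat \<Rightarrow> nat) \<Rightarrow> real \<Rightarrow> real \<Rightarrow> real \<Rightarrow> real \<Rightarrow> nat" where
  "sis_mix d n f a lam kap \<epsilon> = mix_time (sis_P d n f a lam kap) (states n) \<epsilon>"

end

theory Submission
  imports Defs "HOL-Real_Asymp.Real_Asymp"
begin

text \<open>The external infection dominates the dynamics, whatever the multigraph: a healthy site
  chosen for update becomes infected with probability at least \<open>min 1 a > 1 - 1/n\<^sup>2\<close>, an
  infected one recovers with probability \<open>kap = O(1/n\<^sup>2)\<close>. Hence the number \<open>Z\<close> of healthy
  sites has a linear drift, and after \<open>2 n ln n\<close> steps its mean is at most \<open>1/sqrt n + 1/n\<close>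
  from any start. By Markov's inequality the chain is then in the all-infected state with
  probability close to 1; this is a Doeblin minorization, giving a unique stationary
  distribution, which is concentrated on that state as well, and the upper bound. Started from
  the all-healthy state, a site stays healthy until it is first chosen, so the mean of \<open>Z\<close> is
  at least \<open>sqrt n\<close> up to time \<open>(n - 1) ln n / 2\<close>; two distinct sites are healthy together
  with probability about the square of the single-site probability, and the second moment
  method shows that \<open>Z > 0\<close> with probability close to 1, which gives the lower bound. Both
  bounds hold for every pairing, so the probability over the configuration model is 1.\<close>

lemma sum_point_mass:
  fixes g :: "'a \<Rightarrow> real"
  assumes "finite S" "c \<in> S"
  shows "(\<Sum>\<tau>\<in>S. (if \<tau> = c then k else 0) * g \<tau>) = k * g c"
  using assms by (simp add: if_distrib[of "\<lambda>u. u * _"] cong: if_cong)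

lemma sum_mult_sum_swap:
  fixes f :: "'a \<Rightarrow> real"
  shows "(\<Sum>s\<in>B. (\<Sum>r\<in>A. f r * h r s) * g s) = (\<Sum>r\<in>A. f r * (\<Sum>s\<in>B. h r s * g s))"
proof -
  have "(\<Sum>s\<in>B. (\<Sum>r\<in>A. f r * h r s) * g s) = (\<Sum>s\<in>B. \<Sum>r\<in>A. f r * (h r s * g s))"
    by (simp add: sum_distrib_right mult.assoc)
  also have "\<dots> = (\<Sum>r\<in>A. f r * (\<Sum>s\<in>B. h r s * g s))"
    by (subst sum.swap) (simp add: sum_distrib_left)
  finally show ?thesis .
qed

lemma sum_mult_affine:
  fixes w h :: "'a \<Rightarrow> real"
  shows "(\<Sum>q\<in>A. w q * (B * h q + C)) = B * (\<Sum>q\<in>A. w q * h q) + C * (\<Sum>q\<in>A. w q)"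
  by (simp add: algebra_simps sum.distrib sum_distrib_left)

lemma linear_recurrence_le:
  fixes u :: "nat \<Rightarrow> real"
  assumes step: "\<And>t. u (Suc t) \<le> \<rho> * u t + \<beta>" and "0 \<le> \<rho>" "\<rho> < 1" "0 \<le> \<beta>"
  shows "u t \<le> \<rho>^t * u 0 + \<beta> / (1 - \<rho>)"
proof (induction t)
  case (Suc t)
  have "u (Suc t) \<le> \<rho> * (\<rho>^t * u 0 + \<beta> / (1 - \<rho>)) + \<beta>"
    using step[of t] Suc mult_left_mono[OF Suc \<open>0 \<le> \<rho>\<close>] by linarith
  also have "\<dots> = \<rho>^Suc t * u 0 + \<beta> / (1 - \<rho>)"
    using \<open>\<rho> < 1\<close> by (simp add: field_simps)
  finally show ?case .
qed (use assms in simp)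

lemma linear_recurrence_ge:
  fixes u :: "nat \<Rightarrow> real"
  assumes step: "\<And>t. \<rho> * u t \<le> u (Suc t)" and "0 \<le> \<rho>"
  shows "\<rho>^t * u 0 \<le> u t"
proof (induction t)
  case (Suc t)
  then show ?case
    using step[of t] mult_left_mono[OF Suc \<open>0 \<le> \<rho>\<close>] by (simp add: mult.assoc)
qed simp

lemma convergent_geometric_increments:
  fixes x :: "nat \<Rightarrow> real"
  assumes incr: "\<And>k. \<bar>x (Suc k) - x k\<bar> \<le> C * q^k" and "0 \<le> q" "q < 1"
  shows "convergent x"
proof -
  have "summable (\<lambda>k. C * q^k)"
    using assms by (intro summable_mult summable_geometric) auto
  then have "summable (\<lambda>k. x (Suc k) - x k)"
    by (rule summable_comparison_test') (use incr in auto)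
  then have "convergent (\<lambda>k. (\<Sum>i<k. x (Suc i) - x i) + x 0)"
    by (intro convergent_add convergent_const) (simp add: summable_iff_convergent)
  then show ?thesis by (simp add: sum_lessThan_telescope)
qed

lemma tv_dist_off_mass:
  fixes \<mu> \<pi> :: "'s \<Rightarrow> real"
  assumes fin: "finite S" and ss: "ss \<in> S"
    and "(\<Sum>s\<in>S. \<mu> s) = 1" "(\<Sum>s\<in>S. \<pi> s) = 1"
    and \<mu>_nonneg: "\<And>s. s \<in> S \<Longrightarrow> 0 \<le> \<mu> s" and \<pi>_nonneg: "\<And>s. s \<in> S \<Longrightarrow> 0 \<le> \<pi> s"
  shows "tv_dist S \<mu> \<pi> \<le> (\<Sum>s\<in>S-{ss}. \<mu> s) + (\<Sum>s\<in>S-{ss}. \<pi> s)"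
    and "(\<Sum>s\<in>S-{ss}. \<mu> s) - (\<Sum>s\<in>S-{ss}. \<pi> s) \<le> tv_dist S \<mu> \<pi>"
proof -
  define m p where "m = (\<Sum>s\<in>S-{ss}. \<mu> s)" and "p = (\<Sum>s\<in>S-{ss}. \<pi> s)"
  have remove: "sum g S = g ss + sum g (S - {ss})" for g :: "'s \<Rightarrow> real"
    using sum.remove[OF fin ss] .
  have at_ss: "\<mu> ss = 1 - m" "\<pi> ss = 1 - p"
    using remove[of \<mu>] remove[of \<pi>] assms(3,4) unfolding m_def p_def by simp_all
  have "0 \<le> m" "0 \<le> p"
    unfolding m_def p_def using \<mu>_nonneg \<pi>_nonneg by (auto intro: sum_nonneg)
  have "(\<Sum>s\<in>S-{ss}. \<bar>\<mu> s - \<pi> s\<bar>) \<le> (\<Sum>s\<in>S-{ss}. \<mu> s + \<pi> s)"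
    by (rule sum_mono) (use \<mu>_nonneg \<pi>_nonneg in \<open>auto simp: abs_if\<close>)
  then have off_le: "(\<Sum>s\<in>S-{ss}. \<bar>\<mu> s - \<pi> s\<bar>) \<le> m + p"
    unfolding m_def p_def by (simp add: sum.distrib)
  have "(\<Sum>s\<in>S-{ss}. \<mu> s - \<pi> s) \<le> (\<Sum>s\<in>S-{ss}. \<bar>\<mu> s - \<pi> s\<bar>)"
    by (rule sum_mono) auto
  then have off_ge: "m - p \<le> (\<Sum>s\<in>S-{ss}. \<bar>\<mu> s - \<pi> s\<bar>)"
    unfolding m_def p_def by (simp add: sum_subtractf)
  have tv: "2 * tv_dist S \<mu> \<pi> = \<bar>\<mu> ss - \<pi> ss\<bar> + (\<Sum>s\<in>S-{ss}. \<bar>\<mu> s - \<pi> s\<bar>)"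
    unfolding tv_dist_def by (simp add: remove)
  have "\<bar>\<mu> ss - \<pi> ss\<bar> \<le> m + p" "m - p \<le> \<bar>\<mu> ss - \<pi> ss\<bar>"
    using at_ss \<open>0 \<le> m\<close> \<open>0 \<le> p\<close> by auto
  then show "tv_dist S \<mu> \<pi> \<le> m + p" and "m - p \<le> tv_dist S \<mu> \<pi>"
    using tv off_le off_ge by linarith+
qed

lemma off_mass_le_expectation:
  fixes \<nu> Z :: "'s \<Rightarrow> real"
  assumes fin: "finite S" and ss: "ss \<in> S" and \<nu>_nonneg: "\<And>s. s \<in> S \<Longrightarrow> 0 \<le> \<nu> s"
    and "0 \<le> Z ss" and Z_ge_1: "\<And>s. s \<in> S - {ss} \<Longrightarrow> 1 \<le> Z s"
  shows "(\<Sum>s\<in>S-{ss}. \<nu> s) \<le> (\<Sum>s\<in>S. \<nu> s * Z s)"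
proof -
  have "(\<Sum>s\<in>S-{ss}. \<nu> s) \<le> (\<Sum>s\<in>S-{ss}. \<nu> s * Z s)"
    by (rule sum_mono) (use \<nu>_nonneg Z_ge_1 mult_left_mono[of 1 _ "\<nu> _"] in fastforce)
  also have "\<dots> \<le> \<nu> ss * Z ss + (\<Sum>s\<in>S-{ss}. \<nu> s * Z s)"
    using \<nu>_nonneg[OF ss] \<open>0 \<le> Z ss\<close> by simp
  also have "\<dots> = (\<Sum>s\<in>S. \<nu> s * Z s)"
    using sum.remove[OF fin ss, of "\<lambda>s. \<nu> s * Z s"] by simp
  finally show ?thesis .
qed

lemma expectation_square_le:
  fixes \<nu> Z :: "'s \<Rightarrow> real"
  assumes fin: "finite S" and ss: "ss \<in> S" and \<nu>_nonneg: "\<And>s. s \<in> S \<Longrightarrow> 0 \<le> \<nu> s"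
    and "Z ss = 0"
  shows "(\<Sum>s\<in>S. \<nu> s * Z s)^2 \<le> (\<Sum>s\<in>S. \<nu> s * (Z s)^2) * (\<Sum>s\<in>S-{ss}. \<nu> s)"
proof -
  have off: "sum g S = sum g (S - {ss})" if "g ss = 0" for g :: "'s \<Rightarrow> real"
    using sum.remove[OF fin ss, of g] that by simp
  have "(\<Sum>s\<in>S-{ss}. \<nu> s * Z s) = (\<Sum>s\<in>S-{ss}. (sqrt (\<nu> s) * Z s) * sqrt (\<nu> s))"
    using \<nu>_nonneg by (intro sum.cong) (auto simp: algebra_simps real_sqrt_mult_self)
  then have "(\<Sum>s\<in>S-{ss}. \<nu> s * Z s)^2
      \<le> (\<Sum>s\<in>S-{ss}. (sqrt (\<nu> s) * Z s)^2) * (\<Sum>s\<in>S-{ss}. (sqrt (\<nu> s))^2)"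
    by (metis Cauchy_Schwarz_ineq_sum)
  also have "\<dots> = (\<Sum>s\<in>S-{ss}. \<nu> s * (Z s)^2) * (\<Sum>s\<in>S-{ss}. \<nu> s)"
    using \<nu>_nonneg by (simp add: power_mult_distrib)
  finally show ?thesis using off[of "\<lambda>s. \<nu> s * Z s"] off[of "\<lambda>s. \<nu> s * (Z s)^2"] \<open>Z ss = 0\<close>
    by simp
qed

lemma second_moment_method:
  fixes E M A :: real
  assumes "E^2 \<le> M * A" "M \<le> E^2 + E + 1" "1 \<le> E" "0 \<le> A"
  shows "1 - 1 / E - 1 / E^2 \<le> A"
proof -
  have pos: "0 < E^2 + E + 1" using \<open>1 \<le> E\<close> by (simp add: add_pos_pos)
  have "(E^2 + E + 1) * (1 - 1 / E - 1 / E^2) = E^2 - 1 - 2 / E - 1 / E^2"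
    using \<open>1 \<le> E\<close> by (simp add: field_simps power2_eq_square)
  also have "\<dots> \<le> E^2"
  proof -
    have "0 \<le> 2 / E + 1 / E^2" using \<open>1 \<le> E\<close> by simp
    then show ?thesis by linarith
  qed
  also have "\<dots> \<le> (E^2 + E + 1) * A" using assms mult_right_mono by (meson order_trans)
  finally show ?thesis using pos by (simp add: mult_le_cancel_left_pos)
qed

lemma one_minus_power_le_exp:
  fixes x :: real
  assumes "x \<le> 1"
  shows "(1 - x)^t \<le> exp (- (real t * x))"
proof -
  have "(1 - x)^t \<le> exp (- x)^t"
    using exp_ge_add_one_self[of "- x"] assms by (intro power_mono) auto
  then show ?thesis by (simp add: exp_of_nat_mult[symmetric])
qed

lemma exp_le_one_minus_inverse_power:
  fixes m :: real
  assumes "1 < m"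
  shows "exp (- (real t / (m - 1))) \<le> (1 - 1 / m)^t"
proof -
  have "1 + 1 / (m - 1) \<le> exp (1 / (m - 1))" by (rule exp_ge_add_one_self)
  then have "1 / exp (1 / (m - 1)) \<le> 1 / (1 + 1 / (m - 1))"
    using assms by (intro divide_left_mono) (auto simp: field_simps)
  also have "\<dots> = 1 - 1 / m" using assms by (simp add: field_simps)
  finally have "exp (- (1 / (m - 1)))^t \<le> (1 - 1 / m)^t"
    by (intro power_mono) (auto simp: exp_minus field_simps)
  then show ?thesis by (simp add: exp_of_nat_mult[symmetric])
qed

locale finite_markov_chain =
  fixes P :: "'s \<Rightarrow> 's \<Rightarrow> real" and S :: "'s set"
  assumes finite_S: "finite S"
    and P_nonneg: "\<And>r s. r \<in> S \<Longrightarrow> 0 \<le> P r s"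
    and P_row_sum: "\<And>r. r \<in> S \<Longrightarrow> (\<Sum>s\<in>S. P r s) = 1"
    and P_outside: "\<And>r s. r \<in> S \<Longrightarrow> s \<notin> S \<Longrightarrow> P r s = 0"
begin

abbreviation law :: "'s \<Rightarrow> nat \<Rightarrow> 's \<Rightarrow> real" where
  "law s0 t \<equiv> chain_dist P S s0 t"

lemma law_Suc_expectation:
  "(\<Sum>s\<in>S. law s0 (Suc t) s * g s) = (\<Sum>r\<in>S. law s0 t r * (\<Sum>s\<in>S. P r s * g s))"
  by (simp add: sum_mult_sum_swap)

lemma law_distribution:
  assumes "s0 \<in> S"
  shows "(\<forall>s. 0 \<le> law s0 t s) \<and> (\<forall>s. s \<notin> S \<longrightarrow> law s0 t s = 0) \<and> (\<Sum>s\<in>S. law s0 t s) = 1"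
proof (induction t)
  case 0
  then show ?case using assms finite_S by auto
next
  case (Suc t)
  have "(\<Sum>s\<in>S. law s0 (Suc t) s) = (\<Sum>r\<in>S. law s0 t r * (\<Sum>s\<in>S. P r s))"
    using law_Suc_expectation[of s0 t "\<lambda>_. 1"] by simp
  then show ?case using Suc P_nonneg P_outside P_row_sum by (auto intro!: sum_nonneg)
qed

lemma law_nonneg: "s0 \<in> S \<Longrightarrow> 0 \<le> law s0 t s"
  and law_outside: "s0 \<in> S \<Longrightarrow> s \<notin> S \<Longrightarrow> law s0 t s = 0"
  and law_sum: "s0 \<in> S \<Longrightarrow> (\<Sum>s\<in>S. law s0 t s) = 1"
  using law_distribution by blast+

lemma law_le_1:
  assumes "s0 \<in> S"
  shows "law s0 t s \<le> 1"
proof (cases "s \<in> S")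
  case True
  then have "law s0 t s \<le> (\<Sum>s\<in>S. law s0 t s)"
    using finite_S assms by (intro member_le_sum) (auto simp: law_nonneg)
  then show ?thesis using law_sum assms by simp
qed (simp add: assms law_outside)

lemma law_0_expectation: "s0 \<in> S \<Longrightarrow> (\<Sum>s\<in>S. law s0 0 s * g s) = g s0"
  using sum_point_mass[OF finite_S, of s0 1 g] by simp

lemma law_add:
  assumes "s0 \<in> S"
  shows "law s0 (t + k) s = (\<Sum>r\<in>S. law s0 t r * law r k s)"
proof (induction k arbitrary: s)
  case 0
  show ?case
    by (simp add: if_distrib[of "\<lambda>u. _ * u"] finite_S assms law_outside cong: if_cong)
next
  case (Suc k)
  then show ?case by (simp add: sum_mult_sum_swap)
qed

lemma stationary_law:
  assumes "is_stationary P S \<pi>"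
  shows "(\<Sum>r\<in>S. \<pi> r * law r k s) = \<pi> s"
proof (induction k arbitrary: s)
  case 0
  show ?case
    using assms by (simp add: if_distrib[of "\<lambda>u. _ * u"] finite_S is_stationary_def cong: if_cong)
next
  case (Suc k)
  have "(\<Sum>r\<in>S. \<pi> r * law r (Suc k) s) = (\<Sum>q\<in>S. (\<Sum>r\<in>S. \<pi> r * law r k q) * P q s)"
    by (simp add: sum_mult_sum_swap)
  also have "\<dots> = (\<Sum>q\<in>S. \<pi> q * P q s)"
    using Suc by simp
  also have "\<dots> = \<pi> s"
    using assms P_outside by (cases "s \<in> S") (auto simp: is_stationary_def)
  finally show ?case .
qed

lemma stationary_expectation:
  assumes "is_stationary P S \<pi>"
  shows "(\<Sum>s\<in>S. \<pi> s * g s) = (\<Sum>r\<in>S. \<pi> r * (\<Sum>s\<in>S. P r s * g s))"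
proof -
  have "(\<Sum>s\<in>S. \<pi> s * g s) = (\<Sum>s\<in>S. (\<Sum>r\<in>S. \<pi> r * P r s) * g s)"
    using assms unfolding is_stationary_def by (intro sum.cong) auto
  then show ?thesis by (simp add: sum_mult_sum_swap)
qed

lemma law_expectation_Suc_le:
  assumes s0: "s0 \<in> S" and drift: "\<And>q. q \<in> S \<Longrightarrow> (\<Sum>s\<in>S. P q s * g s) \<le> B * g q + C"
  shows "(\<Sum>s\<in>S. law s0 (Suc t) s * g s) \<le> B * (\<Sum>s\<in>S. law s0 t s * g s) + C"
proof -
  have "(\<Sum>s\<in>S. law s0 (Suc t) s * g s) \<le> (\<Sum>q\<in>S. law s0 t q * (B * g q + C))"
    unfolding law_Suc_expectation
    by (intro sum_mono mult_left_mono drift) (auto simp: s0 law_nonneg)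
  then show ?thesis by (simp add: sum_mult_affine law_sum s0)
qed

lemma law_expectation_Suc_ge:
  assumes s0: "s0 \<in> S" and drift: "\<And>q. q \<in> S \<Longrightarrow> B * g q \<le> (\<Sum>s\<in>S. P q s * g s)"
  shows "B * (\<Sum>s\<in>S. law s0 t s * g s) \<le> (\<Sum>s\<in>S. law s0 (Suc t) s * g s)"
proof -
  have "(\<Sum>q\<in>S. law s0 t q * (B * g q + 0)) \<le> (\<Sum>s\<in>S. law s0 (Suc t) s * g s)"
    unfolding law_Suc_expectation
    by (intro sum_mono mult_left_mono) (auto simp: drift s0 law_nonneg)
  then show ?thesis by (simp add: sum_distrib_left mult.left_commute)
qed

lemma law_expectation_le:
  assumes s0: "s0 \<in> S" and drift: "\<And>q. q \<in> S \<Longrightarrow> (\<Sum>s\<in>S. P q s * g s) \<le> B * g q + C"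
    and B: "0 \<le> B" "B < 1" and C: "0 \<le> C"
  shows "(\<Sum>s\<in>S. law s0 t s * g s) \<le> B^t * g s0 + C / (1 - B)"
proof -
  have "\<And>t. (\<Sum>s\<in>S. law s0 (Suc t) s * g s) \<le> B * (\<Sum>s\<in>S. law s0 t s * g s) + C"
    using s0 drift by (rule law_expectation_Suc_le)
  then have "(\<Sum>s\<in>S. law s0 t s * g s) \<le> B^t * (\<Sum>s\<in>S. law s0 0 s * g s) + C / (1 - B)"
    using B C by (rule linear_recurrence_le)
  then show ?thesis by (simp only: law_0_expectation[OF s0])
qed

lemma law_expectation_ge:
  assumes s0: "s0 \<in> S" and drift: "\<And>q. q \<in> S \<Longrightarrow> B * g q \<le> (\<Sum>s\<in>S. P q s * g s)"
    and B: "0 \<le> B"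
  shows "B^t * g s0 \<le> (\<Sum>s\<in>S. law s0 t s * g s)"
proof -
  have "\<And>t. B * (\<Sum>s\<in>S. law s0 t s * g s) \<le> (\<Sum>s\<in>S. law s0 (Suc t) s * g s)"
    using s0 drift by (rule law_expectation_Suc_ge)
  then have "B^t * (\<Sum>s\<in>S. law s0 0 s * g s) \<le> (\<Sum>s\<in>S. law s0 t s * g s)"
    using B by (rule linear_recurrence_ge)
  then show ?thesis by (simp only: law_0_expectation[OF s0])
qed

lemma stationary_expectation_le:
  assumes st: "is_stationary P S \<pi>"
    and drift: "\<And>q. q \<in> S \<Longrightarrow> (\<Sum>s\<in>S. P q s * g s) \<le> B * g q + C" and "B < 1"
  shows "(\<Sum>s\<in>S. \<pi> s * g s) \<le> C / (1 - B)"
proof -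
  have \<pi>_nonneg: "\<And>s. s \<in> S \<Longrightarrow> 0 \<le> \<pi> s" and \<pi>_sum: "(\<Sum>s\<in>S. \<pi> s) = 1"
    using st by (simp_all add: is_stationary_def)
  have "(\<Sum>s\<in>S. \<pi> s * g s) \<le> (\<Sum>q\<in>S. \<pi> q * (B * g q + C))"
    unfolding stationary_expectation[OF st, of g]
    by (intro sum_mono mult_left_mono drift \<pi>_nonneg)
  also have "\<dots> = B * (\<Sum>s\<in>S. \<pi> s * g s) + C"
    by (simp add: sum_mult_affine \<pi>_sum)
  finally show ?thesis using \<open>B < 1\<close> by (simp add: field_simps)
qed

end

text \<open>Doeblin's argument: a kernel putting mass at least \<open>c\<close> on a fixed state contracts
  signed measures of total mass zero by the factor \<open>1 - c\<close> in \<open>\<ell>\<^sup>1\<close>, since subtracting the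
  common part \<open>c \<delta>\<^sub>s\<^sub>s\<close> from every row does not change their image.\<close>

lemma doeblin_contraction:
  fixes Q :: "'s \<Rightarrow> 's \<Rightarrow> real"
  assumes fin: "finite S" and ss: "ss \<in> S" and Q_nonneg: "\<And>r s. r \<in> S \<Longrightarrow> 0 \<le> Q r s"
    and Q_row_sum: "\<And>r. r \<in> S \<Longrightarrow> (\<Sum>s\<in>S. Q r s) = 1"
    and Q_ss: "\<And>r. r \<in> S \<Longrightarrow> c \<le> Q r ss" and \<nu>: "(\<Sum>r\<in>S. \<nu> r) = 0"
  shows "(\<Sum>s\<in>S. \<bar>\<Sum>r\<in>S. \<nu> r * Q r s\<bar>) \<le> (1 - c) * (\<Sum>r\<in>S. \<bar>\<nu> r\<bar>)"
proof -
  define R where "R r s = Q r s - (if s = ss then c else 0)" for r s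
  have image_eq: "(\<Sum>r\<in>S. \<nu> r * Q r s) = (\<Sum>r\<in>S. \<nu> r * R r s)" for s
  proof -
    have "(\<Sum>r\<in>S. \<nu> r * R r s)
        = (\<Sum>r\<in>S. \<nu> r * Q r s) - (\<Sum>r\<in>S. \<nu> r) * (if s = ss then c else 0)"
      unfolding R_def by (simp add: right_diff_distrib sum_subtractf sum_distrib_right)
    then show ?thesis using \<nu> by simp
  qed
  have R_nonneg: "r \<in> S \<Longrightarrow> 0 \<le> R r s" for r s
    using Q_nonneg Q_ss unfolding R_def by auto
  have R_row_sum: "r \<in> S \<Longrightarrow> (\<Sum>s\<in>S. R r s) = 1 - c" for r
    using Q_row_sum fin ss unfolding R_def by (simp add: sum_subtractf)
  have "(\<Sum>s\<in>S. \<bar>\<Sum>r\<in>S. \<nu> r * Q r s\<bar>) \<le> (\<Sum>s\<in>S. \<Sum>r\<in>S. \<bar>\<nu> r\<bar> * R r s)"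
    unfolding image_eq
    by (intro sum_mono order_trans[OF sum_abs]) (simp add: abs_mult R_nonneg)
  also have "\<dots> = (\<Sum>r\<in>S. \<bar>\<nu> r\<bar> * (1 - c))"
    using R_row_sum by (simp add: sum_mult_sum_swap[where g = "\<lambda>_. 1", simplified])
  finally show ?thesis by (metis mult.commute sum_distrib_right)
qed

locale doeblin_chain = finite_markov_chain +
  fixes ss and c :: real and T :: nat
  assumes ss_in_S: "ss \<in> S" and c_pos: "0 < c"
    and minorization: "\<And>r. r \<in> S \<Longrightarrow> c \<le> law r T ss"
begin

lemma c_le_1: "c \<le> 1"
  using minorization[OF ss_in_S] law_le_1[OF ss_in_S, of T ss] by linarith

lemma law_T_contraction:
  assumes "(\<Sum>r\<in>S. \<nu> r) = 0"
  shows "(\<Sum>s\<in>S. \<bar>\<Sum>r\<in>S. \<nu> r * law r T s\<bar>) \<le> (1 - c) * (\<Sum>r\<in>S. \<bar>\<nu> r\<bar>)"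
  by (rule doeblin_contraction[OF finite_S ss_in_S])
     (auto simp: law_nonneg law_sum minorization assms)

lemma stationary_unique:
  assumes st1: "is_stationary P S \<pi>1" and st2: "is_stationary P S \<pi>2"
  shows "\<pi>1 = \<pi>2"
proof
  fix s
  have outside: "s \<notin> S \<Longrightarrow> \<pi>1 s = 0 \<and> \<pi>2 s = 0"
    and sums: "(\<Sum>r\<in>S. \<pi>1 r) = 1" "(\<Sum>r\<in>S. \<pi>2 r) = 1"
    using st1 st2 unfolding is_stationary_def by blast+
  define \<nu> where "\<nu> r = \<pi>1 r - \<pi>2 r" for r
  have "(\<Sum>r\<in>S. \<nu> r) = 0"
    unfolding \<nu>_def sum_subtractf sums by simp
  moreover have fixed: "\<nu> s = (\<Sum>r\<in>S. \<nu> r * law r T s)" for s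
    using stationary_law[OF st1, of T s] stationary_law[OF st2, of T s] unfolding \<nu>_def
    by (simp add: left_diff_distrib sum_subtractf)
  then have "(\<Sum>s\<in>S. \<bar>\<nu> s\<bar>) = (\<Sum>s\<in>S. \<bar>\<Sum>r\<in>S. \<nu> r * law r T s\<bar>)"
    by (intro sum.cong refl arg_cong[where f = abs])
  ultimately have "(\<Sum>s\<in>S. \<bar>\<nu> s\<bar>) \<le> (1 - c) * (\<Sum>s\<in>S. \<bar>\<nu> s\<bar>)"
    using law_T_contraction[of \<nu>] by simp
  then have "c * (\<Sum>s\<in>S. \<bar>\<nu> s\<bar>) \<le> 0"
    by (simp add: left_diff_distrib)
  then have "(\<Sum>s\<in>S. \<bar>\<nu> s\<bar>) \<le> 0"
    using c_pos by (simp add: mult_le_0_iff)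
  then have "(\<Sum>s\<in>S. \<bar>\<nu> s\<bar>) = 0"
    by (intro order_antisym sum_nonneg) auto
  then have "s \<in> S \<Longrightarrow> \<nu> s = 0"
    using sum_nonneg_eq_0_iff[OF finite_S, of "\<lambda>s. \<bar>\<nu> s\<bar>"] by simp
  then show "\<pi>1 s = \<pi>2 s" unfolding \<nu>_def using outside by (cases "s \<in> S") auto
qed

lemma law_shift_contraction:
  assumes r: "r \<in> S"
  shows "(\<Sum>s\<in>S. \<bar>law r (u + k * T) s - law r (v + k * T) s\<bar>) \<le> 2 * (1 - c)^k"
proof (induction k)
  case 0
  have "(\<Sum>s\<in>S. \<bar>law r u s - law r v s\<bar>) \<le> (\<Sum>s\<in>S. law r u s + law r v s)"
    by (intro sum_mono) (auto simp: abs_if law_nonneg r)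
  then show ?case by (simp add: sum.distrib law_sum r)
next
  case (Suc k)
  have shift: "law r (w + Suc k * T) s = (\<Sum>q\<in>S. law r (w + k * T) q * law q T s)" for w s
    using law_add[OF r, of "w + k * T" T s] by (simp add: algebra_simps)
  have "(\<Sum>s\<in>S. \<bar>law r (u + Suc k * T) s - law r (v + Suc k * T) s\<bar>)
      \<le> (1 - c) * (\<Sum>s\<in>S. \<bar>law r (u + k * T) s - law r (v + k * T) s\<bar>)"
    unfolding shift by (rule order_trans[OF eq_refl law_T_contraction])
      (auto simp: left_diff_distrib sum_subtractf law_sum r)
  also have "\<dots> \<le> (1 - c) * (2 * (1 - c)^k)"
    using Suc c_le_1 by (intro mult_left_mono) auto
  finally show ?case by simp
qed

lemma law_shift_pointwise:
  assumes r: "r \<in> S"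
  shows "\<bar>law r (u + k * T) s - law r (v + k * T) s\<bar> \<le> 2 * (1 - c)^k"
proof (cases "s \<in> S")
  case True
  then have "\<bar>law r (u + k * T) s - law r (v + k * T) s\<bar>
      \<le> (\<Sum>s\<in>S. \<bar>law r (u + k * T) s - law r (v + k * T) s\<bar>)"
    by (intro member_le_sum finite_S) auto
  then show ?thesis using law_shift_contraction[OF r, of u k v] by linarith
qed (use c_le_1 in \<open>simp add: law_outside r\<close>)

text \<open>The stationary distribution is the limit of the laws at the times \<open>k T\<close>, which form
  a Cauchy sequence by the contraction.\<close>

lemma stationary_exists: "\<exists>\<pi>. is_stationary P S \<pi>"
proof -
  define x where "x k s = law ss (k * T) s" for k s
  have geometric: "(\<lambda>k. 2 * (1 - c)^k) \<longlonglongrightarrow> 0"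
    using c_pos c_le_1 by (intro tendsto_mult_right_zero LIMSEQ_power_zero) auto
  have "convergent (\<lambda>k. x k s)" for s
    using law_shift_pointwise[OF ss_in_S, of T _ s 0] c_pos c_le_1 unfolding x_def
    by (intro convergent_geometric_increments[of _ 2 "1 - c"]) (auto simp: algebra_simps)
  then obtain \<pi> where x_lim: "\<And>s. (\<lambda>k. x k s) \<longlonglongrightarrow> \<pi> s"
    unfolding convergent_def by metis
  have "is_stationary P S \<pi>"
    unfolding is_stationary_def
  proof (intro conjI ballI allI impI)
    show "0 \<le> \<pi> s" for s
      by (rule LIMSEQ_le_const[OF x_lim]) (auto simp: x_def law_nonneg ss_in_S)
    show "\<pi> s = 0" if "s \<notin> S" for s
      using x_lim[of s] that by (simp add: x_def law_outside ss_in_S LIMSEQ_const_iff)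
    have "(\<lambda>k. \<Sum>s\<in>S. x k s) \<longlonglongrightarrow> (\<Sum>s\<in>S. \<pi> s)" by (intro tendsto_sum x_lim)
    then show "(\<Sum>s\<in>S. \<pi> s) = 1"
      by (simp add: x_def law_sum ss_in_S LIMSEQ_const_iff)
  next
    fix s
    have "(\<lambda>k. law ss (1 + k * T) s - x k s) \<longlonglongrightarrow> 0"
      using law_shift_pointwise[OF ss_in_S, of 1 _ s 0] unfolding x_def
      by (intro Lim_null_comparison[OF _ geometric]) auto
    then have "(\<lambda>k. (law ss (1 + k * T) s - x k s) + x k s) \<longlonglongrightarrow> 0 + \<pi> s"
      by (intro tendsto_add x_lim)
    then have "(\<lambda>k. \<Sum>r\<in>S. x k r * P r s) \<longlonglongrightarrow> \<pi> s" by (simp add: x_def)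
    moreover have "(\<lambda>k. \<Sum>r\<in>S. x k r * P r s) \<longlonglongrightarrow> (\<Sum>r\<in>S. \<pi> r * P r s)"
      by (intro tendsto_sum tendsto_mult_right x_lim)
    ultimately show "(\<Sum>r\<in>S. \<pi> r * P r s) = \<pi> s" by (rule LIMSEQ_unique[rotated])
  qed
  then show ?thesis by blast
qed

lemma is_stationary_stat_dist: "is_stationary P S (stat_dist P S)"
proof -
  obtain \<pi> where \<pi>: "is_stationary P S \<pi>" using stationary_exists ..
  show ?thesis
    unfolding stat_dist_def by (rule theI[of _ \<pi>]) (use \<pi> stationary_unique in blast)+
qed

end

lemma finite_states: "finite (states n)"
proof (rule finite_subset)
  show "states n \<subseteq> (\<lambda>A x. x \<in> A) ` Pow {..<n}"
  proof
    fix \<sigma> assume "\<sigma> \<in> states n"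
    then have "\<sigma> = (\<lambda>x. x \<in> {x. x < n \<and> \<sigma> x})"
      unfolding states_def fun_eq_iff mem_Collect_eq by (metis not_le)
    then show "\<sigma> \<in> (\<lambda>A x. x \<in> A) ` Pow {..<n}" by blast
  qed
qed simp

lemma fun_upd_in_states: "\<sigma> \<in> states n \<Longrightarrow> z < n \<Longrightarrow> \<sigma>(z := v) \<in> states n"
  unfolding states_def by auto

lemma all_healthy_in_states: "(\<lambda>_. False) \<in> states n"
  and all_infected_in_states: "(\<lambda>x. x < n) \<in> states n"
  unfolding states_def by simp_all

definition num_healthy :: "nat \<Rightarrow> (nat \<Rightarrow> bool) \<Rightarrow> real" where
  "num_healthy n \<sigma> = (\<Sum>x<n. of_bool (\<not> \<sigma> x))"

lemma num_healthy_all_infected: "num_healthy n (\<lambda>x. x < n) = 0"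
  unfolding num_healthy_def by simp

lemma num_healthy_ge_1:
  assumes "\<sigma> \<in> states n - {\<lambda>x. x < n}"
  shows "1 \<le> num_healthy n \<sigma>"
proof -
  obtain x where x: "x < n" "\<not> \<sigma> x"
    using assms unfolding states_def by (force simp: fun_eq_iff not_le)
  then have "of_bool (\<not> \<sigma> x) \<le> num_healthy n \<sigma>"
    unfolding num_healthy_def by (intro member_le_sum) auto
  then show ?thesis using x by simp
qed

lemma sum_mult_num_healthy:
  "(\<Sum>s\<in>A. w s * num_healthy n s) = (\<Sum>x<n. \<Sum>s\<in>A. w s * of_bool (\<not> s x))"
  unfolding num_healthy_def sum_distrib_left by (rule sum.swap)

lemma sum_mult_num_healthy_sq:
  "(\<Sum>s\<in>A. w s * (num_healthy n s)^2)
     = (\<Sum>x<n. \<Sum>y<n. \<Sum>s\<in>A. w s * of_bool (\<not> s x \<and> \<not> s y))"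
proof -
  have "(num_healthy n s)^2 = (\<Sum>x<n. \<Sum>y<n. of_bool (\<not> s x \<and> \<not> s y))" for s
    unfolding num_healthy_def power2_eq_square sum_product of_bool_conj ..
  then have "(\<Sum>s\<in>A. w s * (num_healthy n s)^2)
      = (\<Sum>s\<in>A. \<Sum>x<n. \<Sum>y<n. w s * of_bool (\<not> s x \<and> \<not> s y))"
    by (simp only: sum_distrib_left)
  also have "\<dots> = (\<Sum>x<n. \<Sum>s\<in>A. \<Sum>y<n. w s * of_bool (\<not> s x \<and> \<not> s y))"
    by (rule sum.swap)
  also have "\<dots> = (\<Sum>x<n. \<Sum>y<n. \<Sum>s\<in>A. w s * of_bool (\<not> s x \<and> \<not> s y))"
    by (rule sum.cong[OF refl], rule sum.swap)
  finally show ?thesis .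
qed

locale sis =
  fixes d n :: nat and f :: "nat \<Rightarrow> nat" and a lam kap :: real
  assumes n_ge_3: "3 \<le> n" and kap_pos: "0 < kap" and kap_small: "kap < 1 / (4 * (real n - 1)^2)"
    and a_large: "1 - 1 / (real n)^2 < a" and lam_nonneg: "0 \<le> lam"
begin

abbreviation S :: "(nat \<Rightarrow> bool) set" where "S \<equiv> states n"
abbreviation P :: "(nat \<Rightarrow> bool) \<Rightarrow> (nat \<Rightarrow> bool) \<Rightarrow> real" where "P \<equiv> sis_P d n f a lam kap"
abbreviation site :: "nat \<Rightarrow> (nat \<Rightarrow> bool) \<Rightarrow> (nat \<Rightarrow> bool) \<Rightarrow> real" where
  "site \<equiv> site_step d n f a lam kap"
abbreviation all_infected :: "nat \<Rightarrow> bool" where "all_infected \<equiv> \<lambda>x. x < n"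

text \<open>Since \<open>infp\<close> is capped at 1, the graph-independent lower bound on it is \<open>min 1 a\<close>.\<close>

definition p_min :: real where "p_min = min 1 a"

lemma n_pos: "0 < real n"
  using n_ge_3 by simp

lemma p_min_ge: "1 - 1 / (real n)^2 \<le> p_min"
  using a_large unfolding p_min_def by simp

lemma p_min_le_1: "p_min \<le> 1"
  unfolding p_min_def by simp

lemma p_min_ge_8_9: "8/9 \<le> p_min"
proof -
  have "(3::real) * 3 \<le> real n * real n"
    by (rule mult_mono) (use n_ge_3 in auto)
  then have "1 / (real n)^2 \<le> 1/9"
    by (intro divide_left_mono) (auto simp: power2_eq_square)
  then show ?thesis using p_min_ge by linarith
qed

lemma n_sq_kap_le: "(real n)^2 * kap \<le> p_min"
proof -
  have "(2 * real n) * (2 * real n) \<le> (3 * (real n - 1)) * (3 * (real n - 1))"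
    by (rule mult_mono) (use n_ge_3 in auto)
  then have "4 * (real n)^2 \<le> 9 * (real n - 1)^2"
    by (simp add: power2_eq_square algebra_simps)
  then have "(real n)^2 * kap \<le> (9/4 * (real n - 1)^2) * kap"
    using kap_pos by (intro mult_right_mono) auto
  also have "\<dots> = 9/16 * (kap * (4 * (real n - 1)^2))"
    by (simp add: algebra_simps)
  also have "\<dots> \<le> 9/16"
  proof -
    have "0 < (real n - 1)^2" using n_ge_3 by simp
    then have "kap * (4 * (real n - 1)^2) < 1" using kap_small by (simp add: field_simps)
    then show ?thesis by simp
  qed
  finally show ?thesis using p_min_ge_8_9 by linarith
qed

lemma kap_div_p_min_le: "kap / p_min \<le> 1 / (real n)^2"
  using n_sq_kap_le n_pos p_min_ge_8_9 by (simp add: field_simps)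

lemma kap_le_1: "kap \<le> 1"
proof -
  have "1 * kap \<le> (real n)^2 * kap"
    using n_ge_3 kap_pos by (intro mult_right_mono) (auto simp: one_le_power)
  then show ?thesis using n_sq_kap_le p_min_le_1 by linarith
qed

lemma infp_bounds:
  "p_min \<le> infp d n f a lam \<sigma> x" "0 \<le> infp d n f a lam \<sigma> x" "infp d n f a lam \<sigma> x \<le> 1"
proof -
  have "0 \<le> lam * real (nI d n f \<sigma> x)" using lam_nonneg by simp
  then show "p_min \<le> infp d n f a lam \<sigma> x" "infp d n f a lam \<sigma> x \<le> 1"
    unfolding infp_def p_min_def by auto
  then show "0 \<le> infp d n f a lam \<sigma> x" using p_min_ge_8_9 by linarith
qed

lemma site_step_expectation:
  assumes \<sigma>: "\<sigma> \<in> S" and z: "z < n"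
  shows "(\<Sum>\<tau>\<in>S. site z \<sigma> \<tau> * g \<tau>) =
    (if \<sigma> z then kap * g (\<sigma>(z := False)) + (1 - kap) * g \<sigma>
     else infp d n f a lam \<sigma> z * g (\<sigma>(z := True)) + (1 - infp d n f a lam \<sigma> z) * g \<sigma>)"
  using sum_point_mass[OF finite_states fun_upd_in_states[OF \<sigma> z]]
    sum_point_mass[OF finite_states \<sigma>]
  by (simp add: site_step_def distrib_right sum.distrib)

lemma sis_P_expectation:
  "(\<Sum>\<tau>\<in>S. P \<sigma> \<tau> * g \<tau>) = (\<Sum>z<n. \<Sum>\<tau>\<in>S. site z \<sigma> \<tau> * g \<tau>) / real n"
  unfolding sis_P_def
  by (simp add: sum_distrib_right sum_divide_distrib[symmetric] sum.swap[of _ S])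

lemma sis_finite_markov_chain: "finite_markov_chain P S"
proof
  show "finite S" by (rule finite_states)
  show "0 \<le> P r s" for r s
    using infp_bounds kap_pos kap_le_1
    unfolding sis_P_def site_step_def by (auto intro!: sum_nonneg divide_nonneg_nonneg)
  show "(\<Sum>s\<in>S. P r s) = 1" if "r \<in> S" for r
  proof -
    have "(\<Sum>\<tau>\<in>S. site z r \<tau> * 1) = 1" if "z < n" for z
      using site_step_expectation[OF \<open>r \<in> S\<close> that, of "\<lambda>_. 1"] by simp
    then show ?thesis using sis_P_expectation[of r "\<lambda>_. 1"] n_pos by simp
  qed
  show "P r s = 0" if "r \<in> S" "s \<notin> S" for r s
  proof -
    have "site z r s = 0" if "z < n" for z
      using fun_upd_in_states[OF \<open>r \<in> S\<close> that] \<open>r \<in> S\<close> \<open>s \<notin> S\<close>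
      unfolding site_step_def by auto
    then show ?thesis unfolding sis_P_def by simp
  qed
qed

end

sublocale sis \<subseteq> finite_markov_chain "sis_P d n f a lam kap" "states n"
  by (rule sis_finite_markov_chain)

context sis
begin

lemma site_healthy:
  assumes \<sigma>: "\<sigma> \<in> S" and x: "x < n" and z: "z < n"
  shows "(\<Sum>\<tau>\<in>S. site z \<sigma> \<tau> * of_bool (\<not> \<tau> x))
      \<le> of_bool (\<not> \<sigma> x) + (if z = x then kap - p_min * of_bool (\<not> \<sigma> x) else 0)"
    and "of_bool (\<not> \<sigma> x) - (if z = x then of_bool (\<not> \<sigma> x) else 0)
      \<le> (\<Sum>\<tau>\<in>S. site z \<sigma> \<tau> * of_bool (\<not> \<tau> x))"
  using infp_bounds[of \<sigma> z] kap_pos kap_le_1 by (auto simp: site_step_expectation[OF \<sigma> z])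

lemma site_healthy_pair:
  assumes \<sigma>: "\<sigma> \<in> S" and "x \<noteq> y" and z: "z < n"
  shows "(\<Sum>\<tau>\<in>S. site z \<sigma> \<tau> * of_bool (\<not> \<tau> x \<and> \<not> \<tau> y))
      \<le> of_bool (\<not> \<sigma> x \<and> \<not> \<sigma> y)
       + (if z = x then kap - p_min * of_bool (\<not> \<sigma> x \<and> \<not> \<sigma> y) else 0)
       + (if z = y then kap - p_min * of_bool (\<not> \<sigma> x \<and> \<not> \<sigma> y) else 0)"
  using infp_bounds[of \<sigma> z] kap_pos kap_le_1 \<open>x \<noteq> y\<close>
  by (auto simp: site_step_expectation[OF \<sigma> z])

lemma healthy_drift:
  assumes \<sigma>: "\<sigma> \<in> S" and x: "x < n"
  shows "(\<Sum>\<tau>\<in>S. P \<sigma> \<tau> * of_bool (\<not> \<tau> x)) \<le> (1 - p_min / n) * of_bool (\<not> \<sigma> x) + kap / n"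
    and "(1 - 1 / n) * of_bool (\<not> \<sigma> x) \<le> (\<Sum>\<tau>\<in>S. P \<sigma> \<tau> * of_bool (\<not> \<tau> x))"
proof -
  let ?h = "of_bool (\<not> \<sigma> x) :: real"
  have "(\<Sum>z<n. \<Sum>\<tau>\<in>S. site z \<sigma> \<tau> * of_bool (\<not> \<tau> x))
      \<le> (\<Sum>z<n. ?h + (if z = x then kap - p_min * ?h else 0))"
    by (intro sum_mono site_healthy(1)[OF \<sigma> x]) simp
  also have "\<dots> = n * ((1 - p_min / n) * ?h + kap / n)"
    using x n_pos by (simp add: sum.distrib field_simps)
  finally show "(\<Sum>\<tau>\<in>S. P \<sigma> \<tau> * of_bool (\<not> \<tau> x)) \<le> (1 - p_min / n) * ?h + kap / n"
    unfolding sis_P_expectation using n_pos by (simp add: divide_le_eq mult.commute)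
  have "n * ((1 - 1 / n) * ?h) = (\<Sum>z<n. ?h - (if z = x then ?h else 0))"
    using x n_pos by (simp add: sum_subtractf field_simps)
  also have "\<dots> \<le> (\<Sum>z<n. \<Sum>\<tau>\<in>S. site z \<sigma> \<tau> * of_bool (\<not> \<tau> x))"
    by (intro sum_mono site_healthy(2)[OF \<sigma> x]) simp
  finally show "(1 - 1 / n) * ?h \<le> (\<Sum>\<tau>\<in>S. P \<sigma> \<tau> * of_bool (\<not> \<tau> x))"
    unfolding sis_P_expectation using n_pos by (simp add: le_divide_eq mult.commute)
qed

lemma healthy_pair_drift:
  assumes \<sigma>: "\<sigma> \<in> S" and x: "x < n" and y: "y < n" and "x \<noteq> y"
  shows "(\<Sum>\<tau>\<in>S. P \<sigma> \<tau> * of_bool (\<not> \<tau> x \<and> \<not> \<tau> y))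
      \<le> (1 - 2 * p_min / n) * of_bool (\<not> \<sigma> x \<and> \<not> \<sigma> y) + 2 * kap / n"
proof -
  let ?h = "of_bool (\<not> \<sigma> x \<and> \<not> \<sigma> y) :: real"
  have "(\<Sum>z<n. \<Sum>\<tau>\<in>S. site z \<sigma> \<tau> * of_bool (\<not> \<tau> x \<and> \<not> \<tau> y))
      \<le> (\<Sum>z<n. ?h + (if z = x then kap - p_min * ?h else 0) + (if z = y then kap - p_min * ?h else 0))"
    by (intro sum_mono site_healthy_pair[OF \<sigma> \<open>x \<noteq> y\<close>]) simp
  also have "\<dots> = n * ((1 - 2 * p_min / n) * ?h + 2 * kap / n)"
    using x y n_pos by (simp add: sum.distrib field_simps)
  finally show ?thesis
    unfolding sis_P_expectation using n_pos by (simp add: divide_le_eq mult.commute)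
qed


lemma healthy_prob_le:
  assumes r: "r \<in> S" and x: "x < n"
  shows "(\<Sum>s\<in>S. law r t s * of_bool (\<not> s x)) \<le> (1 - p_min / n)^t + kap / p_min"
proof -
  have "(\<Sum>s\<in>S. law r t s * of_bool (\<not> s x))
      \<le> (1 - p_min / n)^t * of_bool (\<not> r x) + (kap / n) / (1 - (1 - p_min / n))"
    using healthy_drift(1)[OF _ x] p_min_ge_8_9 p_min_le_1 n_ge_3 kap_pos
    by (intro law_expectation_le[OF r]) (auto simp: field_simps)
  moreover have "(1 - p_min / n)^t * of_bool (\<not> r x) \<le> (1 - p_min / n)^t"
    using p_min_le_1 n_ge_3 by (simp add: field_simps)
  moreover have "(kap / n) / (1 - (1 - p_min / n)) = kap / p_min"
    using n_pos p_min_ge_8_9 by (simp add: field_simps)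
  ultimately show ?thesis by linarith
qed

lemma healthy_pair_prob_le:
  assumes r: "r \<in> S" and x: "x < n" and y: "y < n" and "x \<noteq> y"
  shows "(\<Sum>s\<in>S. law r t s * of_bool (\<not> s x \<and> \<not> s y)) \<le> (1 - 2 * p_min / n)^t + kap / p_min"
proof -
  have "(\<Sum>s\<in>S. law r t s * of_bool (\<not> s x \<and> \<not> s y))
      \<le> (1 - 2 * p_min / n)^t * of_bool (\<not> r x \<and> \<not> r y) + (2 * kap / n) / (1 - (1 - 2 * p_min / n))"
    using healthy_pair_drift[OF _ x y \<open>x \<noteq> y\<close>] p_min_ge_8_9 p_min_le_1 n_ge_3 kap_pos
    by (intro law_expectation_le[OF r]) (auto simp: field_simps)
  moreover have "(1 - 2 * p_min / n)^t * of_bool (\<not> r x \<and> \<not> r y) \<le> (1 - 2 * p_min / n)^t"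
    using p_min_le_1 n_ge_3 by (simp add: field_simps)
  moreover have "(2 * kap / n) / (1 - (1 - 2 * p_min / n)) = kap / p_min"
    using n_pos p_min_ge_8_9 by (simp add: field_simps)
  ultimately show ?thesis by linarith
qed

lemma healthy_prob_from_all_healthy_ge:
  assumes x: "x < n"
  shows "(1 - 1 / n)^t \<le> (\<Sum>s\<in>S. law (\<lambda>_. False) t s * of_bool (\<not> s x))"
  using law_expectation_ge[OF all_healthy_in_states healthy_drift(2)[OF _ x], of t] n_ge_3
  by simp

lemma stationary_healthy_prob_le:
  assumes st: "is_stationary P S \<pi>" and x: "x < n"
  shows "(\<Sum>s\<in>S. \<pi> s * of_bool (\<not> s x)) \<le> kap / p_min"
proof -
  have "(\<Sum>s\<in>S. \<pi> s * of_bool (\<not> s x)) \<le> (kap / n) / (1 - (1 - p_min / n))"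
    using healthy_drift(1)[OF _ x] p_min_ge_8_9 n_pos
    by (intro stationary_expectation_le[OF st]) auto
  also have "\<dots> = kap / p_min"
    using n_pos p_min_ge_8_9 by (simp add: field_simps)
  finally show ?thesis .
qed

lemma mean_healthy_le:
  assumes r: "r \<in> S"
  shows "(\<Sum>s\<in>S. law r t s * num_healthy n s) \<le> n * ((1 - p_min / n)^t + kap / p_min)"
proof -
  have "(\<Sum>x<n. \<Sum>s\<in>S. law r t s * of_bool (\<not> s x)) \<le> (\<Sum>x<n. (1 - p_min / n)^t + kap / p_min)"
    by (intro sum_mono healthy_prob_le[OF r]) simp
  then show ?thesis unfolding sum_mult_num_healthy by simp
qed

lemma mean_healthy_from_all_healthy_ge:
  "n * (1 - 1 / n)^t \<le> (\<Sum>s\<in>S. law (\<lambda>_. False) t s * num_healthy n s)"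
proof -
  have "(\<Sum>x<n. (1 - 1 / n)^t) \<le> (\<Sum>x<n. \<Sum>s\<in>S. law (\<lambda>_. False) t s * of_bool (\<not> s x))"
    by (intro sum_mono healthy_prob_from_all_healthy_ge) simp
  then show ?thesis unfolding sum_mult_num_healthy by simp
qed

lemma second_moment_healthy_le:
  assumes r: "r \<in> S"
  shows "(\<Sum>s\<in>S. law r t s * (num_healthy n s)^2)
      \<le> (\<Sum>s\<in>S. law r t s * num_healthy n s) + n * n * ((1 - 2 * p_min / n)^t + kap / p_min)"
proof -
  let ?B = "(1 - 2 * p_min / n)^t + kap / p_min"
  have "0 \<le> ?B"
    using p_min_le_1 p_min_ge_8_9 n_ge_3 kap_pos by (simp add: field_simps)
  have row: "(\<Sum>y<n. \<Sum>s\<in>S. law r t s * of_bool (\<not> s x \<and> \<not> s y))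
      \<le> (\<Sum>s\<in>S. law r t s * of_bool (\<not> s x)) + n * ?B" if x: "x < n" for x
  proof -
    have "(\<Sum>y\<in>{..<n}-{x}. \<Sum>s\<in>S. law r t s * of_bool (\<not> s x \<and> \<not> s y)) \<le> (\<Sum>y\<in>{..<n}-{x}. ?B)"
      using healthy_pair_prob_le[OF r x] by (intro sum_mono) auto
    also have "\<dots> \<le> n * ?B"
      using x \<open>0 \<le> ?B\<close> by (simp add: mult_right_mono)
    finally show ?thesis
      using x by (simp add: sum.remove[of "{..<n}" x])
  qed
  show ?thesis
    unfolding sum_mult_num_healthy_sq sum_mult_num_healthy
    using sum_mono[of "{..<n}", OF row] by (simp add: sum.distrib mult.assoc)
qed

lemma stationary_not_all_infected_le:
  assumes st: "is_stationary P S \<pi>"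
  shows "(\<Sum>s\<in>S-{all_infected}. \<pi> s) \<le> 1 / n"
proof -
  have "(\<Sum>s\<in>S-{all_infected}. \<pi> s) \<le> (\<Sum>s\<in>S. \<pi> s * num_healthy n s)"
    using st num_healthy_ge_1
    by (intro off_mass_le_expectation[OF finite_states all_infected_in_states])
      (auto simp: is_stationary_def num_healthy_all_infected)
  also have "\<dots> \<le> n * (kap / p_min)"
    unfolding sum_mult_num_healthy
    using sum_mono[of "{..<n}", OF stationary_healthy_prob_le[OF st]] by simp
  also have "\<dots> \<le> 1 / n"
    using kap_div_p_min_le n_pos by (simp add: field_simps power2_eq_square)
  finally show ?thesis .
qed

lemma law_not_all_infected_le_mean:
  "r \<in> S \<Longrightarrow> (\<Sum>s\<in>S-{all_infected}. law r t s) \<le> (\<Sum>s\<in>S. law r t s * num_healthy n s)"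
  using num_healthy_ge_1
  by (intro off_mass_le_expectation[OF finite_states all_infected_in_states])
    (auto simp: law_nonneg num_healthy_all_infected)


lemma ln_n_ge_1: "1 \<le> ln (real n)"
  using n_ge_3 exp_le by (subst ln_ge_iff) auto

lemma exp_half_ln_n: "exp (ln (real n) / 2) = sqrt (real n)"
  using n_pos by (simp flip: ln_sqrt)

lemma healthy_decay_le:
  assumes T: "2 * real n * ln (real n) \<le> real T"
  shows "n * (1 - p_min / n)^T \<le> 1 / sqrt (real n)"
proof -
  let ?L = "ln (real n)"
  have "(3/2) * ?L \<le> 2 * p_min * ?L"
    using p_min_ge_8_9 ln_n_ge_1 by (intro mult_right_mono) auto
  also have "\<dots> = (2 * real n * ?L) * (p_min / n)"
    using n_pos by (simp add: field_simps)
  also have "\<dots> \<le> real T * (p_min / n)"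
    using T p_min_ge_8_9 n_pos by (intro mult_right_mono) auto
  finally have exponent: "(3/2) * ?L \<le> real T * (p_min / n)" .
  have "(1 - p_min / n)^T \<le> exp (- (real T * (p_min / n)))"
    using p_min_le_1 n_ge_3 by (intro one_minus_power_le_exp) simp
  also have "\<dots> \<le> exp (- ?L) * exp (- (?L / 2))"
    using exponent by (simp flip: exp_add)
  also have "\<dots> = (1 / n) * (1 / sqrt n)"
    using n_pos exp_half_ln_n by (simp add: exp_minus inverse_eq_divide)
  finally show ?thesis using n_pos by (simp add: field_simps)
qed

lemma healthy_decay_ge:
  assumes t: "real t \<le> (real n - 1) / 2 * ln (real n)"
  shows "sqrt (real n) \<le> n * (1 - 1 / n)^t"
proof -
  have "real t / (real n - 1) \<le> ln (real n) / 2"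
    using t n_ge_3 by (simp add: field_simps)
  then have "exp (- (ln (real n) / 2)) \<le> exp (- (real t / (real n - 1)))"
    by simp
  also have "\<dots> \<le> (1 - 1 / n)^t"
    using n_ge_3 by (intro exp_le_one_minus_inverse_power) simp
  finally have "n * exp (- (ln (real n) / 2)) \<le> n * (1 - 1 / n)^t"
    using n_pos by (intro mult_left_mono) auto
  moreover have "n * exp (- (ln (real n) / 2)) = sqrt n"
    using n_pos exp_half_ln_n by (simp add: exp_minus field_simps real_div_sqrt)
  ultimately show ?thesis by simp
qed

definition t_up :: nat where "t_up = nat \<lceil>2 * real n * ln (real n)\<rceil>"

definition err :: real where "err = 1 / sqrt (real n) + 4 / real n"

lemma t_up_ge: "2 * real n * ln (real n) \<le> real t_up"
  unfolding t_up_def by linarith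

lemma t_up_le: "real t_up \<le> 2 * real n * ln (real n) * (1 + 2 / real n)"
proof -
  have "0 \<le> 2 * real n * ln (real n)" using ln_n_ge_1 by simp
  then have "real t_up \<le> 2 * real n * ln (real n) + 1"
    unfolding t_up_def by linarith
  also have "\<dots> \<le> 2 * real n * ln (real n) * (1 + 2 / real n)"
    using n_pos ln_n_ge_1 by (simp add: field_simps)
  finally show ?thesis .
qed

lemma mean_healthy_t_up_le:
  assumes r: "r \<in> S"
  shows "(\<Sum>s\<in>S. law r t_up s * num_healthy n s) \<le> 1 / sqrt (real n) + 1 / n"
proof -
  have "n * (kap / p_min) \<le> 1 / n"
    using kap_div_p_min_le n_pos by (simp add: field_simps power2_eq_square)
  then show ?thesis
    using mean_healthy_le[OF r, of t_up] healthy_decay_le[OF t_up_ge]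
    by (simp add: distrib_left)
qed

lemma all_infected_prob_t_up_ge:
  assumes r: "r \<in> S"
  shows "1 - err \<le> law r t_up all_infected"
proof -
  have "law r t_up all_infected = 1 - (\<Sum>s\<in>S-{all_infected}. law r t_up s)"
    using sum.remove[OF finite_states[of n] all_infected_in_states, of "law r t_up"] law_sum[OF r]
    by simp
  moreover have "1 / real n \<le> 4 / real n" using n_pos by (simp add: divide_right_mono)
  ultimately show ?thesis
    using law_not_all_infected_le_mean[OF r, of t_up] mean_healthy_t_up_le[OF r]
    unfolding err_def by linarith
qed

lemma is_stationary_stat_dist_sis:
  assumes "err < 1"
  shows "is_stationary P S (stat_dist P S)"
proof -
  interpret doeblin_chain P S all_infected "1 - err" t_up
    using assms all_infected_prob_t_up_ge by unfold_locales (auto simp: all_infected_in_states)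
  show ?thesis by (rule is_stationary_stat_dist)
qed

lemma tv_t_up_le:
  assumes st: "is_stationary P S \<pi>" and r: "r \<in> S"
  shows "tv_dist S (law r t_up) \<pi> \<le> err"
proof -
  have "tv_dist S (law r t_up) \<pi> \<le> (\<Sum>s\<in>S-{all_infected}. law r t_up s) + (\<Sum>s\<in>S-{all_infected}. \<pi> s)"
    using st by (intro tv_dist_off_mass(1)[OF finite_states all_infected_in_states])
      (auto simp: is_stationary_def law_sum law_nonneg r)
  also have "\<dots> \<le> (1 / sqrt (real n) + 1 / n) + 1 / n"
    using law_not_all_infected_le_mean[OF r, of t_up] mean_healthy_t_up_le[OF r]
      stationary_not_all_infected_le[OF st]
    by linarith
  also have "\<dots> \<le> err"
    unfolding err_def using n_pos by (simp add: field_simps)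
  finally show ?thesis .
qed

lemma second_moment_healthy_from_all_healthy_le:
  assumes t: "real t \<le> (real n - 1) / 2 * ln (real n)"
  defines "E \<equiv> (\<Sum>s\<in>S. law (\<lambda>_. False) t s * num_healthy n s)"
  shows "(\<Sum>s\<in>S. law (\<lambda>_. False) t s * (num_healthy n s)^2) \<le> E^2 + E + 1"
proof -
  have "1 - 2 * p_min / n \<le> (1 - 1 / n)^2"
  proof -
    have "1 / (real n)^2 \<le> 1 / (2 * n)"
      using n_ge_3 by (intro divide_left_mono) (auto simp: power2_eq_square)
    then show ?thesis
      using p_min_ge n_pos by (simp add: power2_eq_square field_simps)
  qed
  then have "(1 - 2 * p_min / n)^t \<le> ((1 - 1 / n)^2)^t"
    using p_min_le_1 n_ge_3 by (intro power_mono) (auto simp: field_simps)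
  then have "n * n * (1 - 2 * p_min / n)^t \<le> (n * (1 - 1 / n)^t)^2"
    using n_pos by (simp add: power_mult_distrib power2_eq_square power_mult[symmetric] mult.commute)
  also have "\<dots> \<le> E^2"
    unfolding E_def using mean_healthy_from_all_healthy_ge n_ge_3 by (intro power_mono) auto
  finally have "n * n * (1 - 2 * p_min / n)^t \<le> E^2" .
  moreover have "n * n * (kap / p_min) \<le> 1"
    using kap_div_p_min_le n_pos by (simp add: field_simps power2_eq_square)
  ultimately show ?thesis
    using second_moment_healthy_le[OF all_healthy_in_states, of t] unfolding E_def
    by (simp add: distrib_left)
qed

lemma not_all_infected_prob_from_all_healthy_ge:
  assumes t: "real t \<le> (real n - 1) / 2 * ln (real n)"
  shows "1 - 1 / sqrt (real n) - 1 / n \<le> (\<Sum>s\<in>S-{all_infected}. law (\<lambda>_. False) t s)"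
proof -
  define E where "E = (\<Sum>s\<in>S. law (\<lambda>_. False) t s * num_healthy n s)"
  have sqrt_E: "sqrt n \<le> E"
    using healthy_decay_ge[OF t] mean_healthy_from_all_healthy_ge[of t] unfolding E_def by linarith
  have "1 \<le> sqrt (real n)" using n_ge_3 by simp
  then have E: "1 \<le> E" using sqrt_E by linarith
  have "1 - 1 / E - 1 / E^2 \<le> (\<Sum>s\<in>S-{all_infected}. law (\<lambda>_. False) t s)"
  proof (rule second_moment_method)
    show "E^2 \<le> (\<Sum>s\<in>S. law (\<lambda>_. False) t s * (num_healthy n s)^2)
        * (\<Sum>s\<in>S-{all_infected}. law (\<lambda>_. False) t s)"
      unfolding E_def
      by (intro expectation_square_le[OF finite_states all_infected_in_states])
        (auto simp: law_nonneg all_healthy_in_states num_healthy_all_infected)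
    show "(\<Sum>s\<in>S. law (\<lambda>_. False) t s * (num_healthy n s)^2) \<le> E^2 + E + 1"
      unfolding E_def by (rule second_moment_healthy_from_all_healthy_le[OF t])
    show "0 \<le> (\<Sum>s\<in>S-{all_infected}. law (\<lambda>_. False) t s)"
      by (intro sum_nonneg) (simp add: law_nonneg all_healthy_in_states)
  qed (rule E)
  moreover have "1 / E \<le> 1 / sqrt n"
    using sqrt_E \<open>1 \<le> sqrt n\<close> E by (intro divide_left_mono mult_pos_pos) auto
  moreover have "1 / E^2 \<le> 1 / n"
  proof -
    have "(sqrt n)^2 \<le> E^2" using sqrt_E \<open>1 \<le> sqrt n\<close> by (intro power_mono) auto
    then show ?thesis using n_pos E by (intro divide_left_mono) auto
  qed
  ultimately show ?thesis by linarith
qed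

lemma tv_from_all_healthy_ge:
  assumes st: "is_stationary P S \<pi>" and t: "real t \<le> (real n - 1) / 2 * ln (real n)"
  shows "1 - err \<le> tv_dist S (law (\<lambda>_. False) t) \<pi>"
proof -
  have "(\<Sum>s\<in>S-{all_infected}. law (\<lambda>_. False) t s) - (\<Sum>s\<in>S-{all_infected}. \<pi> s)
      \<le> tv_dist S (law (\<lambda>_. False) t) \<pi>"
    using st by (intro tv_dist_off_mass(2)[OF finite_states all_infected_in_states])
      (auto simp: is_stationary_def law_sum law_nonneg all_healthy_in_states)
  moreover have "2 / real n \<le> 4 / real n" using n_pos by (simp add: divide_right_mono)
  ultimately show ?thesis
    using not_all_infected_prob_from_all_healthy_ge[OF t] stationary_not_all_infected_le[OF st]
    unfolding err_def by linarith
qed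

lemma sis_mix_bounds:
  assumes "1 / sqrt (real n) + 4 / real n < \<epsilon>" and "1 / sqrt (real n) + 4 / real n < 1 - \<epsilon>"
  shows "real n / 2 * ln (real n) * (1 - 2 / real n) \<le> real (sis_mix d n f a lam kap \<epsilon>)
      \<and> real (sis_mix d n f a lam kap \<epsilon>) \<le> 2 * real n * ln (real n) * (1 + 2 / real n)"
proof -
  have err: "err < \<epsilon>" "err < 1 - \<epsilon>" using assms unfolding err_def by simp_all
  define \<pi> where "\<pi> = stat_dist P S"
  have st: "is_stationary P S \<pi>"
    unfolding \<pi>_def using err by (intro is_stationary_stat_dist_sis) linarith
  have worst: "worst_dist P S t = Max ((\<lambda>s0. tv_dist S (law s0 t) \<pi>) ` S)" for t
    unfolding worst_dist_def \<pi>_def ..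
  have mixed: "worst_dist P S t_up \<le> \<epsilon>"
    unfolding worst using tv_t_up_le[OF st] err finite_states all_infected_in_states
    by (subst Max_le_iff) force+
  have not_mixed: "\<epsilon> < worst_dist P S t" if "real t \<le> (real n - 1) / 2 * ln (real n)" for t
  proof -
    have "tv_dist S (law (\<lambda>_. False) t) \<pi> \<le> worst_dist P S t"
      unfolding worst using finite_states all_healthy_in_states by (intro Max_ge) auto
    then show ?thesis using tv_from_all_healthy_ge[OF st that] err by linarith
  qed
  define M where "M = sis_mix d n f a lam kap \<epsilon>"
  have M: "M = Inf {t. worst_dist P S t \<le> \<epsilon>}"
    unfolding M_def sis_mix_def mix_time_def ..
  have "M \<le> t_up" unfolding M using mixed by (intro cInf_lower) auto
  have "M \<in> {t. worst_dist P S t \<le> \<epsilon>}" unfolding M using mixed by (intro Inf_nat_def1) auto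
  then have "\<not> real M \<le> (real n - 1) / 2 * ln (real n)"
    using not_mixed[of M] by auto
  then have "(real n - 1) / 2 * ln (real n) < real M" by simp
  moreover have "real n / 2 * ln (real n) * (1 - 2 / real n) \<le> (real n - 1) / 2 * ln (real n)"
    using n_pos ln_n_ge_1 by (simp add: field_simps)
  ultimately show ?thesis
    using \<open>M \<le> t_up\<close> t_up_le unfolding M_def by (auto simp: of_nat_mono)
qed

end

text \<open>At \<open>n = 2\<close> the regime forces \<open>2 powr -\<alpha> < kap 2 < 1/4\<close>, hence \<open>\<alpha> > 2\<close>; this
  is what turns \<open>a n > 1 - 1 / n powr \<alpha>\<close> into the bound \<open>a n > 1 - 1/n\<^sup>2\<close> used above, and
  makes the hypothesis \<open>\<alpha> > 1\<close> redundant.\<close>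

lemma exponent_gt_2:
  fixes \<alpha> k :: real
  assumes "k < 1/4" and "1 - 1 / 2 powr \<alpha> > 1 - k"
  shows "2 < \<alpha>"
proof -
  have "1 / 2 powr \<alpha> < 1 / 4" using assms by linarith
  then have "2 powr 2 < (2::real) powr \<alpha>" by (simp add: field_simps)
  then show ?thesis using powr_less_cancel_iff[of "2::real" 2 \<alpha>] by simp
qed

lemma sis_of_regime:
  fixes \<alpha> :: real
  assumes "2 < \<alpha>" and "3 \<le> n" and "0 < kap" and "kap < 1 / (4 * (real n - 1)^2)"
    and "1 - 1 / real n powr \<alpha> < a" and "0 \<le> lam"
  shows "sis n a lam kap"
proof
  have "real n powr 2 \<le> real n powr \<alpha>" using assms by (intro powr_mono) auto
  then have "1 / real n powr \<alpha> \<le> 1 / (real n)^2"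
    using assms by (simp add: powr_realpow divide_left_mono)
  then show "1 - 1 / (real n)^2 < a" using assms by linarith
qed (use assms in auto)

lemma sis_mix_window_eventually:
  fixes a lam kap :: "nat \<Rightarrow> real"
  assumes sis: "\<forall>\<^sub>F n in sequentially. sis n (a n) (lam n) (kap n)"
    and "0 < \<epsilon>" "\<epsilon> < 1" "0 < \<epsilon>'"
  shows "\<forall>\<^sub>F n in sequentially. even (d * n) \<longrightarrow>
      measure_pmf.prob (config_model d n)
        {f. real n / 2 * ln (real n) * (1 - 2 / real n) \<le> real (sis_mix d n f (a n) (lam n) (kap n) \<epsilon>)
            \<and> real (sis_mix d n f (a n) (lam n) (kap n) \<epsilon>) \<le> 2 * real n * ln (real n) * (1 + 2 / real n)}
      \<ge> 1 - \<epsilon>'"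
proof -
  have "(\<lambda>n. 1 / sqrt (real n) + 4 / real n) \<longlonglongrightarrow> 0" by real_asymp
  then have "\<forall>\<^sub>F n in sequentially. 1 / sqrt (real n) + 4 / real n < min \<epsilon> (1 - \<epsilon>)"
    using assms by (intro order_tendstoD(2)) auto
  with sis show ?thesis
  proof eventually_elim
    case (elim n)
    then show ?case
      using sis.sis_mix_bounds[of n "a n" "lam n" "kap n"] \<open>0 < \<epsilon>'\<close>
      by (simp add: measure_pmf.prob_space)
  qed
qed

theorem mainTheorem7:
  fixes d :: nat and a lam kap :: "nat \<Rightarrow> real" and \<alpha> :: real
  assumes alpha: "\<alpha> > 1"
    and regime: "\<And>n. n \<ge> 2 \<Longrightarrow>
        0 < kap n \<and> kap n < 1 / (4 * (real n - 1)^2)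
        \<and> a n > 1 - 1 / real n powr \<alpha> \<and> 1 - 1 / real n powr \<alpha> > 1 - kap n \<and> 1 - kap n > 1/2
        \<and> 0 < lam n \<and> lam n \<le> 1 / (real d * real n powr \<alpha>)"
  shows "\<forall>\<epsilon>. 0 < \<epsilon> \<and> \<epsilon> < 1 \<longrightarrow>
    (\<exists>\<delta> :: nat \<Rightarrow> real. \<delta> \<longlonglongrightarrow> 0 \<and>
      (\<forall>\<epsilon>'>0. \<forall>\<^sub>F n in sequentially. even (d * n) \<longrightarrow>
        measure_pmf.prob (config_model d n)
          {f. real n / 2 * ln (real n) * (1 - \<delta> n) \<le> real (sis_mix d n f (a n) (lam n) (kap n) \<epsilon>)
              \<and> real (sis_mix d n f (a n) (lam n) (kap n) \<epsilon>) \<le> 2 * real n * ln (real n) * (1 + \<delta> n)}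
        \<ge> 1 - \<epsilon>'))"
proof -
  have "2 < \<alpha>"
    using regime[of 2] by (intro exponent_gt_2[of "kap 2"]) auto
  then have "sis n (a n) (lam n) (kap n)" if "3 \<le> n" for n
    using regime[of n] that by (intro sis_of_regime) auto
  then have eventually_sis: "\<forall>\<^sub>F n in sequentially. sis n (a n) (lam n) (kap n)"
    by (rule eventually_mono[OF eventually_ge_at_top])
  have "(\<lambda>n. 2 / real n) \<longlonglongrightarrow> 0" by real_asymp
  then show ?thesis
    by (intro allI impI exI[of _ "\<lambda>n. 2 / real n"] conjI
        sis_mix_window_eventually[OF eventually_sis]) auto
qed

end
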